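(* Let $x \in \Gamma$ be a BPSP instance. Then the optimal cost and the set of optimal ICC solutions of the BPSP are, respectively, \begin{align*} \textsc{BPSP}(x) &= \frac{1}{2}\Big\{|x|-1-\max_{z\in\{-1,1\}^{|x|/2}} \sum_{i=1}^{|x|-1}(-1)^{\eta(x,i)} z_{x_i} z_{x_{i+1}}\Big\} \\ &= \frac{1}{2}\Big\{|x|-1+\#_{\mathrm{dl}}(x)-\max_{z\in\{-1,1\}^{|x|/2}} \sum_{\substack{i=1\\ x_i\neq x_{i+1}}}^{|x|-1}(-1)^{\eta(x,i)} z_{x_i} z_{x_{i+1}}\Big\},\\ \widetilde{\textsc{BPSP}^*}(x) &= \operatorname{argmax}_{z\in\{-1,1\}^{|x|/2}} \sum_{i=1}^{|x|-1}(-1)^{\eta(x,i)} z_{x_i} z_{x_{i+1}} = \operatorname{argmax}_{z\in\{-1,1\}^{|x|/2}} \sum_{\substack{i=1\\ x_i\neq x_{i+1}}}^{|x|-1}(-1)^{\eta(x,i)} z_{x_i} z_{x_{i+1}}. \end{align*}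
   Context: $\Gamma_n$ is the set of words $x=(x_1,\ldots,x_{2n})\in[n]^{2n}$ in which every symbol of $[n]=\{1,\ldots,n\}$ occurs exactly twice, and $\Gamma=\bigcup_{n\ge1}\Gamma_n$; $|x|=2n$. A valid colouring of $x$ is $f\in\{r,b\}^{2n}$ with $f_i\neq f_j$ whenever $x_i=x_j$, $i\neq j$; its cost is $\xi(f)=\sum_{i=1}^{2n-1}[f_i\neq f_{i+1}]$, and $\textsc{BPSP}(x)$ is the minimum of $\xi(f)$ over valid colourings. In the ICC encoding, $z\in\{r,b\}^n$ gives the colour of the first occurrence of each symbol (the second occurrence gets the opposite colour), and $\widetilde{\textsc{BPSP}^*}(x)$ is the set of ICC strings $z$ minimising the resulting swap count. In the Ising formulation $r\equiv 1$, $b\equiv -1$. The eta function is $\eta(x,i)=[x_{i+1}\in\{x_1,\ldots,x_i\}]\oplus[x_i\in\{x_1,\ldots,x_{i-1}\}]$ for $i\in[2n-1]$, with $[\cdot]$ the Iverson bracket and $\oplus$ exclusive or. The double letter count is $\#_{\mathrm{dl}}(x)=|\{i\in[2n-1]: x_i=x_{i+1}\}|$. *)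

theory Defs
  imports Complex_Main "HOL-Library.FuncSet"
begin

text \<open>Words are lists; positions are 1-indexed via xat (xat x i = x_i).\<close>

definition xat :: "'a list \<Rightarrow> nat \<Rightarrow> 'a" where
  "xat x i = x ! (i - 1)"

definition Gamma_n :: "nat \<Rightarrow> nat list set" where
  "Gamma_n n = {x. length x = 2 * n \<and> set x \<subseteq> {1..n} \<and>
                   (\<forall>a\<in>{1..n}. count_list x a = 2)}"

definition Gamma :: "nat list set" where
  "Gamma = (\<Union>n\<in>{1..}. Gamma_n n)"

datatype colour = R | B

definition valid_colouring :: "nat list \<Rightarrow> colour list \<Rightarrow> bool" where
  "valid_colouring x f \<longleftrightarrow> length f = length x \<and>
     (\<forall>i\<in>{1..length x}. \<forall>j\<in>{1..length x}. i \<noteq> j \<longrightarrow> xat x i = xat x j \<longrightarrow> xat f i \<noteq> xat f j)"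

definition cost :: "colour list \<Rightarrow> nat" where
  "cost f = card {i\<in>{1..length f - 1}. xat f i \<noteq> xat f (i + 1)}"

definition BPSP :: "nat list \<Rightarrow> nat" where
  "BPSP x = Min (cost ` {f. valid_colouring x f})"

text \<open>ICC encoding: z gives the colour of the first occurrence of each symbol in [n].\<close>

definition opp :: "colour \<Rightarrow> colour" where
  "opp c = (if c = R then B else R)"

definition icc_colouring :: "nat list \<Rightarrow> (nat \<Rightarrow> colour) \<Rightarrow> colour list" where
  "icc_colouring x z = map (\<lambda>i. if xat x i \<in> set (take (i - 1) x)
                                  then opp (z (xat x i)) else z (xat x i)) [1..<length x + 1]"

definition ICC_space :: "nat list \<Rightarrow> (nat \<Rightarrow> colour) set" where
  "ICC_space x = {1..length x div 2} \<rightarrow>\<^sub>E (UNIV :: colour set)"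

definition BPSP_star_ICC :: "nat list \<Rightarrow> (nat \<Rightarrow> colour) set" where
  "BPSP_star_ICC x = {z \<in> ICC_space x.
      \<forall>z' \<in> ICC_space x. cost (icc_colouring x z) \<le> cost (icc_colouring x z')}"

definition spin :: "colour \<Rightarrow> int" where
  "spin c = (if c = R then 1 else -1)"

definition Spin_space :: "nat list \<Rightarrow> (nat \<Rightarrow> int) set" where
  "Spin_space x = {1..length x div 2} \<rightarrow>\<^sub>E {-1, 1}"

definition eta :: "nat list \<Rightarrow> nat \<Rightarrow> bool" where
  "eta x i = ((xat x (i + 1) \<in> set (take i x)) \<noteq> (xat x i \<in> set (take (i - 1) x)))"

definition dl_count :: "nat list \<Rightarrow> nat" where
  "dl_count x = card {i\<in>{1..length x - 1}. xat x i = xat x (i + 1)}"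

definition H :: "nat list \<Rightarrow> (nat \<Rightarrow> int) \<Rightarrow> int" where
  "H x z = (\<Sum>i = 1..length x - 1.
      (-1) ^ (if eta x i then 1 else 0) * z (xat x i) * z (xat x (i + 1)))"

definition H' :: "nat list \<Rightarrow> (nat \<Rightarrow> int) \<Rightarrow> int" where
  "H' x z = (\<Sum>i \<in> {i\<in>{1..length x - 1}. xat x i \<noteq> xat x (i + 1)}.
      (-1) ^ (if eta x i then 1 else 0) * z (xat x i) * z (xat x (i + 1)))"

definition argmax_on :: "('a \<Rightarrow> int) \<Rightarrow> 'a set \<Rightarrow> 'a set" where
  "argmax_on f S = {z \<in> S. \<forall>z' \<in> S. f z' \<le> f z}"

end

theory Submission
  imports Defs
begin

(* A colouring is valid iff the two occurrences of every letter get opposite colours, so the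
   valid colourings are exactly the ICC colourings icc_colouring x z.  With spins s = spin o z,
   the colour at position i has spin s(x_i), negated iff i is a second occurrence; the two
   negations at positions i, i+1 combine to (-1)^eta(x,i).  A colour change contributes
   (1 - spin f_i * spin f_(i+1)) / 2, so 2 * cost = |x| - 1 - H x s, and minimising the
   cost is maximising H over all spin vectors.  At a double letter x_i = x_(i+1) the second
   position is a second occurrence and the first is not, so eta = 1 and the term is -1;
   hence H = H' - #dl. *)

lemma in_set_take_iff: "a \<in> set (take k xs) \<longleftrightarrow> (\<exists>j<k. j < length xs \<and> xs ! j = a)"
  by (auto simp: in_set_conv_nth)

lemma no_three_equal_positions:
  assumes "count_list xs (xs ! k) \<le> 2" "j < k" "k < l" "l < length xs"
    and "xs ! j = xs ! k" "xs ! l = xs ! k"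
  shows False
proof -
  let ?P = "{m. m < length xs \<and> xs ! m = xs ! k}"
  have "count_list xs (xs ! k) = card ?P"
    by (simp add: count_list_eq_length_filter length_filter_conv_card eq_commute)
  moreover have "card {j, k, l} \<le> card ?P"
    using assms by (intro card_mono) auto
  moreover have "card {j, k, l} = 3"
    using assms by auto
  ultimately show False
    using assms(1) by simp
qed

lemma earlier_twin_is_first_occurrence:
  assumes "\<And>a. count_list x a \<le> 2" "i < j" "j < length x" "x ! i = x ! j"
  shows "x ! i \<notin> set (take i x)"
proof
  assume "x ! i \<in> set (take i x)"
  then obtain h where "h < i" "x ! h = x ! i"
    by (auto simp: in_set_take_iff)
  then show False
    using no_three_equal_positions[OF assms(1) _ assms(2,3) _ assms(4)[symmetric]] by blast
qed

lemma xat_in_set: "i \<in> {1..length x} \<Longrightarrow> xat x i \<in> set x"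
  by (auto simp: xat_def)

lemma UNIV_colour: "(UNIV :: colour set) = {R, B}"
  using colour.exhaust by auto

lemma opp_neq [simp]: "opp c \<noteq> c" "c \<noteq> opp c"
  by (cases c; simp add: opp_def)+

lemma opp_opp [simp]: "opp (opp c) = c"
  by (cases c) (simp_all add: opp_def)

lemma neq_iff_opp: "c \<noteq> d \<longleftrightarrow> c = opp d"
  by (cases c; cases d; simp add: opp_def)

lemma spin_opp [simp]: "spin (opp c) = - spin c"
  by (cases c) (simp_all add: spin_def opp_def)

lemma spin_range: "spin c \<in> {-1, 1}"
  by (simp add: spin_def)

lemma spin_mult_spin: "spin c * spin d = (if c = d then 1 else -1)"
  by (cases c; cases d) (simp_all add: spin_def)

lemma valid_colouring_iff_nth:
  "valid_colouring x f \<longleftrightarrow> length f = length x \<and>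
     (\<forall>i<length x. \<forall>j<length x. i \<noteq> j \<longrightarrow> x ! i = x ! j \<longrightarrow> f ! i \<noteq> f ! j)"
proof -
  have "{1..length x} = Suc ` {..<length x}"
    by (simp add: image_Suc_lessThan)
  then show ?thesis
    unfolding valid_colouring_def xat_def by auto
qed

lemma length_icc_colouring [simp]: "length (icc_colouring x z) = length x"
  by (simp add: icc_colouring_def del: upt_Suc)

lemma nth_icc_colouring:
  "k < length x \<Longrightarrow> icc_colouring x z ! k =
     (if x ! k \<in> set (take k x) then opp (z (x ! k)) else z (x ! k))"
  by (simp add: icc_colouring_def xat_def del: upt_Suc)

lemma valid_icc_colouring:
  assumes "\<And>a. count_list x a \<le> 2"
  shows "valid_colouring x (icc_colouring x z)"
proof -
  have "icc_colouring x z ! i \<noteq> icc_colouring x z ! j"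
    if "i < j" "j < length x" "x ! i = x ! j" for i j
  proof -
    have "x ! j \<in> set (take j x)"
      using that by (auto simp: in_set_take_iff)
    moreover have "x ! i \<notin> set (take i x)"
      using earlier_twin_is_first_occurrence[OF assms that] .
    ultimately show ?thesis
      using that by (simp add: nth_icc_colouring)
  qed
  then show ?thesis
    unfolding valid_colouring_iff_nth by (metis length_icc_colouring linorder_neqE_nat)
qed

lemma valid_colouring_imp_icc:
  assumes "set x \<subseteq> A" "valid_colouring x f"
  shows "\<exists>z \<in> A \<rightarrow>\<^sub>E UNIV. f = icc_colouring x z"
proof -
  define z where "z = (\<lambda>a\<in>A. f ! (LEAST k. k < length x \<and> x ! k = a))"
  have valid: "length f = length x"
      "\<And>i j. i < length x \<Longrightarrow> j < length x \<Longrightarrow> i \<noteq> j \<Longrightarrow> x ! i = x ! j \<Longrightarrow> f ! i \<noteq> f ! j"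
    using assms(2) by (auto simp: valid_colouring_iff_nth)
  have "f ! k = icc_colouring x z ! k" if k: "k < length x" for k
  proof -
    define p where "p = (LEAST q. q < length x \<and> x ! q = x ! k)"
    have p: "p < length x" "x ! p = x ! k"
      using LeastI[of "\<lambda>q. q < length x \<and> x ! q = x ! k", OF conjI[OF k refl]] by (auto simp: p_def)
    have p_least: "p \<le> j" if "j < length x" "x ! j = x ! k" for j
      using that by (auto simp: p_def intro: Least_le)
    have repeated: "x ! k \<in> set (take k x) \<longleftrightarrow> p < k"
      using p p_least[of k] p_least k by (force simp: in_set_take_iff)
    have "z (x ! k) = f ! p"
      using assms(1) nth_mem[OF k] by (auto simp: z_def p_def)
    then show ?thesis
      using repeated valid(2)[OF p(1) k _ p(2)] p_least[of k] k
      by (auto simp: nth_icc_colouring neq_iff_opp)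
  qed
  then have "f = icc_colouring x z"
    using valid(1) by (auto intro: nth_equalityI)
  then show ?thesis
    by (auto simp: z_def)
qed

lemma valid_colourings_eq_icc_image:
  assumes "set x \<subseteq> A" "\<And>a. count_list x a \<le> 2"
  shows "{f. valid_colouring x f} = icc_colouring x ` (A \<rightarrow>\<^sub>E UNIV)"
  using valid_colouring_imp_icc[OF assms(1)] valid_icc_colouring[OF assms(2)] by blast

lemma spin_xat_icc_colouring:
  "i \<in> {1..length x} \<Longrightarrow> spin (xat (icc_colouring x z) i) =
     (if xat x i \<in> set (take (i - 1) x) then -1 else 1) * spin (z (xat x i))"
  by (auto simp: xat_def nth_icc_colouring)

lemma cost_icc_colouring_eq_H:
  assumes "set x \<subseteq> A" "x \<noteq> []"
  shows "2 * int (cost (icc_colouring x z)) = int (length x) - 1 - H x (\<lambda>a\<in>A. spin (z a))"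
proof -
  let ?f = "icc_colouring x z" and ?w = "\<lambda>a\<in>A. spin (z a)"
  have edge: "2 * (if xat ?f i \<noteq> xat ?f (i + 1) then 1 else 0) =
      1 - (-1) ^ (if eta x i then 1 else 0) * ?w (xat x i) * ?w (xat x (i + 1))"
    if i: "i \<in> {1..length x - 1}" for i
  proof -
    have "xat x i \<in> A" "xat x (i + 1) \<in> A"
      using i assms(1) xat_in_set[of i x] xat_in_set[of "i + 1" x] by auto
    moreover have "2 * (if xat ?f i \<noteq> xat ?f (i + 1) then 1 else 0) =
        1 - spin (xat ?f i) * spin (xat ?f (i + 1))"
      by (simp add: spin_mult_spin)
    moreover have "i \<in> {1..length x}" "i + 1 \<in> {1..length x}"
      using i by auto
    ultimately show ?thesis
      by (simp add: spin_xat_icc_colouring eta_def)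
  qed
  have "int (cost ?f) = (\<Sum>i\<in>{1..length x - 1}. if xat ?f i \<noteq> xat ?f (i + 1) then 1 else 0)"
    unfolding cost_def length_icc_colouring by (subst sum.inter_filter[symmetric]) simp_all
  then have "2 * int (cost ?f) = (\<Sum>i\<in>{1..length x - 1}. 2 * (if xat ?f i \<noteq> xat ?f (i + 1) then 1 else 0))"
    by (simp add: sum_distrib_left)
  also have "\<dots> = (\<Sum>i\<in>{1..length x - 1}. 1 - (-1) ^ (if eta x i then 1 else 0) * ?w (xat x i) * ?w (xat x (i + 1)))"
    using edge by (rule sum.cong[OF refl])
  also have "\<dots> = int (length x) - 1 - H x ?w"
    using assms(2) by (simp add: H_def sum_subtractf of_nat_diff Suc_le_eq)
  finally show ?thesis .
qed

lemma eta_double_letter: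
  assumes "\<And>a. count_list x a \<le> 2" "i \<in> {1..length x - 1}" "xat x i = xat x (i + 1)"
  shows "eta x i"
proof -
  have twin: "x ! (i - 1) = x ! i" "i - 1 < i" "i < length x"
    using assms(2,3) by (auto simp: xat_def)
  then have "x ! i \<in> set (take i x)"
    by (auto simp: in_set_take_iff)
  moreover have "x ! (i - 1) \<notin> set (take (i - 1) x)"
    using earlier_twin_is_first_occurrence[OF assms(1) twin(2,3,1)] .
  ultimately show ?thesis
    using twin(2) by (simp add: eta_def xat_def)
qed

lemma H_eq_H'_minus_dl_count:
  assumes "\<And>a. count_list x a \<le> 2" "\<And>a. a \<in> set x \<Longrightarrow> w a \<in> {-1, 1}"
  shows "H x w = H' x w - int (dl_count x)"
proof -
  let ?A = "{1..length x - 1}"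
  let ?D = "{i \<in> ?A. xat x i = xat x (i + 1)}"
  let ?t = "\<lambda>i. (-1::int) ^ (if eta x i then 1 else 0) * w (xat x i) * w (xat x (i + 1))"
  have "?t i = -1" if i: "i \<in> ?D" for i
  proof -
    have "i \<in> {1..length x}"
      using i by auto
    then have "w (xat x i) \<in> {-1, 1}"
      using assms(2) xat_in_set by blast
    then have "w (xat x i) * w (xat x (i + 1)) = 1"
      using i by auto
    then show ?thesis
      using i eta_double_letter[OF assms(1)] by simp
  qed
  then have "sum ?t ?D = - int (dl_count x)"
    by (simp add: dl_count_def)
  moreover have "H x w = sum ?t (?A - ?D) + sum ?t ?D"
    unfolding H_def by (rule sum.subset_diff) auto
  moreover have "?A - ?D = {i \<in> ?A. xat x i \<noteq> xat x (i + 1)}"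
    by auto
  ultimately show ?thesis
    unfolding H'_def by simp
qed

lemma cost_icc_colouring_eq_H':
  assumes "set x \<subseteq> A" "x \<noteq> []" "\<And>a. count_list x a \<le> 2"
  shows "2 * int (cost (icc_colouring x z)) =
    int (length x) - 1 + int (dl_count x) - H' x (\<lambda>a\<in>A. spin (z a))"
proof -
  have "(\<lambda>a\<in>A. spin (z a)) a \<in> {-1, 1}" if "a \<in> set x" for a
    using that assms(1) spin_range by auto
  then show ?thesis
    using cost_icc_colouring_eq_H[OF assms(1,2), of z]
      H_eq_H'_minus_dl_count[where w = "\<lambda>a\<in>A. spin (z a)", OF assms(3)]
    by simp
qed

lemma spin_image_PiE: "(\<lambda>z. \<lambda>a\<in>A. spin (z a)) ` (A \<rightarrow>\<^sub>E UNIV) = A \<rightarrow>\<^sub>E {-1, 1}"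
proof
  show "(\<lambda>z. \<lambda>a\<in>A. spin (z a)) ` (A \<rightarrow>\<^sub>E UNIV) \<subseteq> A \<rightarrow>\<^sub>E {-1, 1}"
    by (intro image_subsetI) (simp add: restrict_PiE_iff spin_range del: insert_iff)
  show "A \<rightarrow>\<^sub>E {-1, 1} \<subseteq> (\<lambda>z. \<lambda>a\<in>A. spin (z a)) ` (A \<rightarrow>\<^sub>E UNIV)"
  proof
    fix w :: "'a \<Rightarrow> int"
    assume w: "w \<in> A \<rightarrow>\<^sub>E {-1, 1}"
    define z where "z = (\<lambda>a\<in>A. if w a = 1 then R else B)"
    have "w a = spin (z a)" if "a \<in> A" for a
      using w that by (auto simp: z_def spin_def)
    then have "w = (\<lambda>a\<in>A. spin (z a))"
      using w by (auto simp: PiE_def extensional_def)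
    moreover have "z \<in> A \<rightarrow>\<^sub>E UNIV"
      by (simp add: z_def)
    ultimately show "w \<in> (\<lambda>z. \<lambda>a\<in>A. spin (z a)) ` (A \<rightarrow>\<^sub>E UNIV)"
      by blast
  qed
qed

lemma Min_eq_of_affine_Max:
  fixes c :: "'a \<Rightarrow> nat" and h :: "'b \<Rightarrow> int"
  assumes "finite I" "I \<noteq> {}" "g ` I = S" "\<And>z. z \<in> I \<Longrightarrow> 2 * int (c z) = K - h (g z)"
  shows "2 * int (Min (c ` I)) = K - Max (h ` S)"
proof -
  have "Min (c ` I) \<in> c ` I"
    using assms(1,2) by (intro Min_in) auto
  then obtain z0 where z0: "z0 \<in> I" "c z0 = Min (c ` I)"
    by auto
  have "Max (h ` S) = h (g z0)"
  proof (rule Max_eqI)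
    show "finite (h ` S)"
      using assms(1,3) by blast
    show "y \<le> h (g z0)" if y: "y \<in> h ` S" for y
    proof -
      obtain z where z: "z \<in> I" "y = h (g z)"
        using y assms(3) by blast
      then have "c z0 \<le> c z"
        using z0(2) assms(1) by simp
      then show ?thesis
        using z assms(4)[OF z(1)] assms(4)[OF z0(1)] by linarith
    qed
    show "h (g z0) \<in> h ` S"
      using assms(3) z0(1) by blast
  qed
  then show ?thesis
    using assms(4)[OF z0(1)] z0(2) by simp
qed

lemma argmin_image_eq_argmax_on:
  fixes c :: "'a \<Rightarrow> nat" and h :: "'b \<Rightarrow> int"
  assumes "g ` I = S" "\<And>z. z \<in> I \<Longrightarrow> 2 * int (c z) = K - h (g z)"
  shows "g ` {z \<in> I. \<forall>z'\<in>I. c z \<le> c z'} = argmax_on h S"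
proof -
  have "c z \<le> c z' \<longleftrightarrow> h (g z') \<le> h (g z)" if "z \<in> I" "z' \<in> I" for z z'
    using assms(2)[OF that(1)] assms(2)[OF that(2)] by linarith
  then show ?thesis
    unfolding argmax_on_def using assms(1) by blast
qed

lemma
  assumes "x \<in> Gamma"
  shows Gamma_nonempty: "x \<noteq> []"
    and Gamma_set: "set x \<subseteq> {1..length x div 2}"
    and Gamma_count_list: "count_list x a \<le> 2"
proof -
  obtain n where n: "n \<ge> 1" "length x = 2 * n" "set x \<subseteq> {1..n}" "\<forall>a\<in>{1..n}. count_list x a = 2"
    using assms by (auto simp: Gamma_def Gamma_n_def)
  then show "x \<noteq> []" "set x \<subseteq> {1..length x div 2}"
    by auto
  show "count_list x a \<le> 2"
    using n by (cases "a \<in> set x") auto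
qed

theorem corollary5:
  assumes "x \<in> Gamma"
  shows "real (BPSP x) = (1/2) * (real (length x) - 1 - real_of_int (Max (H x ` Spin_space x)))
    \<and> real (BPSP x) = (1/2) * (real (length x) - 1 + real (dl_count x)
                                   - real_of_int (Max (H' x ` Spin_space x)))
    \<and> (\<lambda>z. \<lambda>a\<in>{1..length x div 2}. spin (z a)) ` BPSP_star_ICC x = argmax_on (H x) (Spin_space x)
    \<and> argmax_on (H x) (Spin_space x) = argmax_on (H' x) (Spin_space x)"
proof -
  let ?A = "{1..length x div 2}"
  let ?spins = "\<lambda>z. \<lambda>a\<in>?A. spin (z a)" and ?c = "\<lambda>z. cost (icc_colouring x z)"
  have I: "ICC_space x = ?A \<rightarrow>\<^sub>E UNIV" "finite (ICC_space x)" "ICC_space x \<noteq> {}"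
    by (auto simp: ICC_space_def UNIV_colour PiE_eq_empty_iff intro!: finite_PiE)
  have spins: "?spins ` ICC_space x = Spin_space x"
    unfolding I(1) Spin_space_def by (rule spin_image_PiE)
  have BPSP: "BPSP x = Min (?c ` ICC_space x)"
    unfolding BPSP_def I(1) image_image
      valid_colourings_eq_icc_image[OF Gamma_set[OF assms] Gamma_count_list[OF assms]] ..
  note H = cost_icc_colouring_eq_H[OF Gamma_set[OF assms] Gamma_nonempty[OF assms]]
  note H' = cost_icc_colouring_eq_H'[OF Gamma_set[OF assms] Gamma_nonempty[OF assms]
      Gamma_count_list[OF assms]]
  have "2 * int (BPSP x) = int (length x) - 1 - Max (H x ` Spin_space x)"
    unfolding BPSP by (rule Min_eq_of_affine_Max[OF I(2,3) spins]) (rule H)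
  moreover have "2 * int (BPSP x) = int (length x) - 1 + int (dl_count x) - Max (H' x ` Spin_space x)"
    unfolding BPSP by (rule Min_eq_of_affine_Max[OF I(2,3) spins]) (rule H')
  moreover have "?spins ` BPSP_star_ICC x = argmax_on (H x) (Spin_space x)"
    unfolding BPSP_star_ICC_def by (rule argmin_image_eq_argmax_on[OF spins]) (rule H)
  moreover have "?spins ` BPSP_star_ICC x = argmax_on (H' x) (Spin_space x)"
    unfolding BPSP_star_ICC_def by (rule argmin_image_eq_argmax_on[OF spins]) (rule H')
  ultimately show ?thesis
    by (auto dest!: arg_cong[where f = real_of_int])
qed

end
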